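(* For every integer $k\ge2$ there are constants $a=a(k)>0$ and $C'=C'(k)$ such that the following holds. Let $d=d(n)$ be a positive integer, $M=nd/k$, and $\epsilon=\epsilon(n)\in(0,1)$ such that $(1-\epsilon)M$ is an integer and \[ C' \left( \left(\frac{d}{n^{k-1}} + \frac{\log n}{d}\right)^{1/3} + \frac1n\right) \le \epsilon < 1 . \] Let $(\eta_1,\dots,\eta_M)$ be the regular $k$-graph process, and for $v\in[n]$ and $t=0,\dots,M$ let $X_t(v)=|\{i\in(t,M] : v\in \eta_i\}|$ and $\tau=1-t/M$. Then asymptotically almost surely, for all integers $0\le t\le(1-\epsilon)M$ and all $v\in[n]$, \[ |X_t(v)-\tau d| \le \sqrt{a\tau d \log n} \le \tau d/2 - 1 . \]
   Context: A $k$-graph on $[n]$ is a family of $k$-element subsets (edges) of $[n]$; it is $d$-regular if each vertex lies in exactly $d$ edges; $k$ divides $nd$ is assumed. The regular $k$-graph process: choose a $d$-regular $k$-graph on $[n]$ uniformly at random and an ordering $(\eta_1,\dots,\eta_M)$ of its $M=nd/k$ edges uniformly at random. Asymptotically almost surely means with probability tending to $1$ as $n\to\infty$. *)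

theory Defs
  imports "HOL-Probability.Probability"
begin

definition regular_kgraph :: "nat \<Rightarrow> nat \<Rightarrow> nat \<Rightarrow> nat set set \<Rightarrow> bool" where
  "regular_kgraph n k d H \<longleftrightarrow>
     H \<subseteq> {e. e \<subseteq> {1..n} \<and> card e = k} \<and>
     (\<forall>v\<in>{1..n}. card {e\<in>H. v \<in> e} = d)"

text \<open>The regular k-graph process: a uniformly random d-regular k-graph H on [n],
  followed by a uniformly random ordering of its edges, represented as a list
  of distinct edges (eta_1,...,eta_M) = (es!0,...,es!(M-1)) with set es = H.\<close>
definition regular_kgraph_process :: "nat \<Rightarrow> nat \<Rightarrow> nat \<Rightarrow> nat set list pmf" where
  "regular_kgraph_process n k d =
     do { H \<leftarrow> pmf_of_set {H. regular_kgraph n k d H};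
          pmf_of_set {es. distinct es \<and> set es = H} }"

text \<open>X_t(v) = |{i in (t,M] : v in eta_i}| (eta 1-indexed, list 0-indexed).\<close>
definition Xt :: "nat \<Rightarrow> nat set list \<Rightarrow> nat \<Rightarrow> nat \<Rightarrow> nat" where
  "Xt M es t v = card {i. t \<le> i \<and> i < M \<and> v \<in> es ! i}"

end

theory Submission
  imports Defs "HOL-Probability.Random_Permutations"
begin

text \<open>Conditionally on the graph \<open>H\<close>, the ordering of the edges is a uniform permutation of the
  \<open>M = n d / k\<close> edges, so \<open>X\<^sub>t(v)\<close> counts how many of the \<open>d\<close> edges at \<open>v\<close> fall into the
  last \<open>M - t\<close> positions: a hypergeometric variable with mean \<open>\<tau> d\<close>. A fixed set of \<open>j\<close> edges lies
  in that tail for at most \<open>M! ((M - t) / M)\<^sup>j\<close> orderings, which bounds the exponential moment of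
  \<open>X\<^sub>t(v)\<close> by that of a binomial variable and gives Chernoff tails \<open>exp (- \<lambda>\<^sup>2 / (4 \<tau> d))\<close>.
  With \<open>\<lambda>\<^sup>2 = a \<tau> d ln n\<close> and \<open>a = 4 (k + 2)\<close>, a union bound over the at most \<open>n\<^sup>k + 1\<close> times
  and the \<open>n\<close> vertices leaves a failure probability of at most \<open>4 / n\<close>. The hypothesis on \<open>\<epsilon>\<close>
  gives \<open>\<tau> d \<ge> \<epsilon> d \<ge> C'\<^sup>3 ln n\<close>, hence \<open>\<lambda> \<le> \<tau> d / 4\<close>, and \<open>d \<le> n\<^bsup>k-1\<^esup> / C'\<^sup>3\<close>,
  which leaves enough room for an explicit cyclic construction of a \<open>d\<close>-regular \<open>k\<close>-graph.\<close>

section \<open>Existence of regular \<open>k\<close>-graphs\<close>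

text \<open>Write \<open>g = gcd n k\<close>, \<open>k = g * w\<close> and split \<open>[0, k T)\<close> into \<open>w\<close> blocks of length \<open>g T\<close>.
  A shape \<open>u\<close> places its \<open>i\<close>-th point in block \<open>i div g\<close>, residue class \<open>i mod g\<close>, at height
  \<open>u i < T\<close>; shapes are normalised by \<open>u 0 = 0\<close>. Edges are the translates of shapes by multiples
  of \<open>g\<close> modulo \<open>n\<close>, shifted into \<open>{1..n}\<close>.\<close>

definition shape_point :: "nat \<Rightarrow> nat \<Rightarrow> (nat \<Rightarrow> nat) \<Rightarrow> nat \<Rightarrow> nat" where
  "shape_point g T u i = g * T * (i div g) + (i mod g + g * u i)"

definition shape_set :: "nat \<Rightarrow> nat \<Rightarrow> nat \<Rightarrow> (nat \<Rightarrow> nat) \<Rightarrow> nat set" where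
  "shape_set g T k u = shape_point g T u ` {0..<k}"

definition shapes :: "nat \<Rightarrow> nat \<Rightarrow> (nat \<Rightarrow> nat) set" where
  "shapes k T = PiE {0..<k} (\<lambda>i. if i = 0 then {0} else {0..<T})"

definition shape_edge :: "nat \<Rightarrow> nat \<Rightarrow> nat \<Rightarrow> nat \<Rightarrow> (nat \<Rightarrow> nat) \<Rightarrow> nat \<Rightarrow> nat set" where
  "shape_edge n g T k u x = (\<lambda>a. (a + g * x) mod n + 1) ` shape_set g T k u"

lemma shapes_lt:
  assumes "u \<in> shapes k T" "i < k" "0 < T"
  shows "u i < T"
proof -
  have "u i \<in> (if i = 0 then {0} else {0..<T})"
    using assms(1,2) unfolding shapes_def by (simp add: PiE_iff)
  with assms(3) show ?thesis by (auto split: if_splits)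
qed

lemma shapes_zero:
  assumes "u \<in> shapes k T" "0 < k"
  shows "u 0 = 0"
proof -
  have "0 \<in> {0..<k}" using assms(2) by simp
  with assms(1) have "u 0 \<in> (if (0::nat) = 0 then {0} else {0..<T})"
    unfolding shapes_def by (rule PiE_mem)
  then show ?thesis by simp
qed

lemma card_shapes: "0 < k \<Longrightarrow> card (shapes k T) = T ^ (k - 1)"
proof -
  assume "0 < k"
  then have "{0..<k} = insert 0 {1..<k}" by auto
  then show ?thesis
    unfolding shapes_def by (simp add: card_PiE prod.insert)
qed

lemma shape_point_mod: "0 < g \<Longrightarrow> shape_point g T u i mod g = i mod g"
  unfolding shape_point_def by (simp add: mult.assoc)

lemma shape_point_offset_lt:
  fixes g T i :: nat and u :: "nat \<Rightarrow> nat"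
  assumes "0 < g" "u i < T"
  shows "i mod g + g * u i < g * T"
proof -
  have "g * (u i + 1) \<le> g * T" using assms(2) by (intro mult_le_mono2) simp
  with mod_less_divisor[OF assms(1), of i] show ?thesis by simp
qed

lemma shape_point_div:
  assumes "0 < g" "u i < T"
  shows "shape_point g T u i div (g * T) = i div g"
  using shape_point_offset_lt[of g u i T] assms unfolding shape_point_def
  by (simp add: mult.commute[of "g * T"])

lemma shape_point_lt:
  assumes "0 < g" "u i < T" "k = g * w" "i < k"
  shows "shape_point g T u i < k * T"
proof -
  have "i div g < w" using assms by (simp add: div_less_iff_less_mult mult.commute)
  then have "g * T * (i div g + 1) \<le> g * T * w" by (intro mult_le_mono2) simp
  also have "\<dots> = k * T" using assms(3) by simp
  finally have "g * T * (i div g + 1) \<le> k * T" .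
  with shape_point_offset_lt[of g u i T] assms(1,2) show ?thesis
    unfolding shape_point_def by (simp add: algebra_simps)
qed

lemma shape_point_eq_iff:
  assumes "0 < g" "u i < T" "u' j < T"
  shows "shape_point g T u i = shape_point g T u' j \<longleftrightarrow> i = j \<and> u i = u' j"
proof
  assume eq: "shape_point g T u i = shape_point g T u' j"
  have "i mod g = j mod g"
    using eq shape_point_mod[OF assms(1), of T u i] shape_point_mod[OF assms(1), of T u' j] by simp
  moreover have "i div g = j div g"
    using eq shape_point_div[of g u i T] shape_point_div[of g u' j T] assms by simp
  ultimately have "i = j" by (metis div_mult_mod_eq)
  with eq assms(1) show "i = j \<and> u i = u' j" unfolding shape_point_def by simp
qed (auto simp: shape_point_def)

lemma inj_on_shape_point:
  assumes "0 < g" "0 < T" "u \<in> shapes k T"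
  shows "inj_on (shape_point g T u) {0..<k}"
proof (rule inj_onI)
  fix i j assume "i \<in> {0..<k}" "j \<in> {0..<k}" "shape_point g T u i = shape_point g T u j"
  with shapes_lt[OF assms(3) _ assms(2)] shape_point_eq_iff[OF assms(1), of u i T u j]
  show "i = j" by simp
qed

lemma card_shape_set:
  assumes "0 < g" "0 < T" "u \<in> shapes k T"
  shows "card (shape_set g T k u) = k"
  using inj_on_shape_point[OF assms] unfolding shape_set_def by (simp add: card_image)

lemma shape_set_lt:
  assumes "0 < g" "0 < T" "k = g * w" "u \<in> shapes k T" "a \<in> shape_set g T k u"
  shows "a < k * T"
  using assms shape_point_lt[of g u _ T k w] shapes_lt[of u k T] unfolding shape_set_def by auto

lemma shape_set_inj:
  assumes g: "0 < g" and T: "0 < T" and u: "u \<in> shapes k T" and u': "u' \<in> shapes k T"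
    and eq: "shape_set g T k u = shape_set g T k u'"
  shows "u = u'"
proof (rule extensionalityI[of _ "{0..<k}"])
  show "u \<in> extensional {0..<k}" "u' \<in> extensional {0..<k}"
    using u u' unfolding shapes_def PiE_def by simp_all
  fix i assume i: "i \<in> {0..<k}"
  then have "shape_point g T u i \<in> shape_point g T u' ` {0..<k}"
    using eq unfolding shape_set_def by blast
  then obtain j where j: "j \<in> {0..<k}" "shape_point g T u i = shape_point g T u' j"
    by (rule imageE)
  moreover have "u i < T" "u' j < T" using shapes_lt[OF u _ T] shapes_lt[OF u' _ T] i j(1) by auto
  ultimately have "i = j \<and> u i = u' j" using shape_point_eq_iff[OF g, of u i T u' j] by blast
  then show "u i = u' i" by blast
qed

lemma mod_add_cancel_right_nat:
  fixes a b c n :: nat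
  assumes "(a + c) mod n = (b + c) mod n"
  shows "a mod n = b mod n"
proof (cases "a \<le> b")
  case True
  then have "n dvd (b + c) - (a + c)" using assms mod_eq_dvd_iff_nat[of "a + c" "b + c" n] by simp
  then show ?thesis using True mod_eq_dvd_iff_nat[of a b n] by simp
next
  case False
  then have "n dvd (a + c) - (b + c)" using assms mod_eq_dvd_iff_nat[of "b + c" "a + c" n] by simp
  then show ?thesis using False mod_eq_dvd_iff_nat[of b a n] by simp
qed

lemma inj_on_shift_mod: "inj_on (\<lambda>a. (a + c) mod n + 1) {0..<n::nat}"
proof (rule inj_onI)
  fix a b assume "a \<in> {0..<n}" "b \<in> {0..<n}" "(a + c) mod n + 1 = (b + c) mod n + 1"
  then show "a = b" using mod_add_cancel_right_nat[of a c n b] by simp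
qed

lemma shape_set_subset:
  assumes "0 < g" "0 < T" "k = g * w" "u \<in> shapes k T" "k * T \<le> n"
  shows "shape_set g T k u \<subseteq> {0..<n}"
  using shape_set_lt[OF assms(1-4)] assms(5) by fastforce

lemma card_shape_edge:
  assumes "0 < g" "0 < T" "k = g * w" "u \<in> shapes k T" "k * T \<le> n"
  shows "card (shape_edge n g T k u x) = k"
  unfolding shape_edge_def
  using card_image[OF inj_on_subset[OF inj_on_shift_mod shape_set_subset[OF assms]]]
    card_shape_set[OF assms(1,2,4)] by simp

lemma shape_edge_subset: "0 < n \<Longrightarrow> shape_edge n g T k u x \<subseteq> {1..n}"
  unfolding shape_edge_def by (auto simp: Suc_le_eq)

lemma shape_edge_inj:
  assumes g: "0 < g" and T: "0 < T" and kw: "k = g * w" and k: "0 < k" and gn: "g dvd n"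
    and n: "2 * (k * T) \<le> n"
    and u: "u \<in> shapes k T" and u': "u' \<in> shapes k T" and x: "x < n div g" and x': "x' < n div g"
    and eq: "shape_edge n g T k u x = shape_edge n g T k u' x'"
  shows "u = u' \<and> x = x'"
proof -
  have gx: "g * x < n" "g * x' < n" using x x' g gn
    by (metis dvd_mult_div_cancel mult_less_cancel1)+
  have zero: "0 \<in> shape_set g T k u" "0 \<in> shape_set g T k u'"
    using shapes_zero[OF u k] shapes_zero[OF u' k] k unfolding shape_set_def shape_point_def
    by (auto intro!: image_eqI[of 0 _ 0])
  have "(g * x) mod n + 1 \<in> shape_edge n g T k u' x'"
    using eq zero(1) unfolding shape_edge_def by force
  then obtain b where b: "b \<in> shape_set g T k u'" "(b + g * x') mod n = (g * x) mod n"
    unfolding shape_edge_def by auto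
  have "(g * x') mod n + 1 \<in> shape_edge n g T k u x"
    using eq zero(2) unfolding shape_edge_def by force
  then obtain a where a: "a \<in> shape_set g T k u" "(a + g * x) mod n = (g * x') mod n"
    unfolding shape_edge_def by auto
  \<comment> \<open>Both translates contain the other's base point, so \<open>a + b \<equiv> 0\<close>; since \<open>a + b < n\<close>, \<open>a = 0\<close>.\<close>
  have "(a + b + g * x') mod n = (a + (b + g * x') mod n) mod n"
    by (simp add: mod_add_right_eq add.assoc)
  also have "\<dots> = (0 + g * x') mod n" using a(2) b(2) by (simp add: mod_add_right_eq)
  finally have "(a + b) mod n = 0 mod n" by (rule mod_add_cancel_right_nat)
  moreover have "a + b < n"
    using shape_set_lt[OF g T kw u a(1)] shape_set_lt[OF g T kw u' b(1)] n by linarith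
  ultimately have "a = 0" by simp
  with a(2) gx have xx: "x = x'" using g by simp
  have "shape_set g T k u = shape_set g T k u'"
    using eq xx inj_on_image_eq_iff[OF inj_on_shift_mod[of "g * x" n]
        shape_set_subset[OF g T kw u] shape_set_subset[OF g T kw u']] n
    unfolding shape_edge_def by simp
  with xx show ?thesis using shape_set_inj[OF g T u u'] by simp
qed

lemma card_residue_class:
  fixes g w r :: nat
  assumes "0 < g" "r < g"
  shows "card {i \<in> {0..<g * w}. i mod g = r} = w"
proof -
  have "{i \<in> {0..<g * w}. i mod g = r} = (\<lambda>j. g * j + r) ` {0..<w}"
  proof (intro set_eqI iffI)
    fix i assume i: "i \<in> {i \<in> {0..<g * w}. i mod g = r}"
    then have "i = g * (i div g) + r" using div_mult_mod_eq[of i g] by (simp add: mult.commute)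
    moreover have "i div g < w" using i assms by (simp add: div_less_iff_less_mult mult.commute)
    ultimately show "i \<in> (\<lambda>j. g * j + r) ` {0..<w}" by force
  next
    fix i assume "i \<in> (\<lambda>j. g * j + r) ` {0..<w}"
    then obtain j where j: "j < w" "i = g * j + r" by auto
    have "g * (j + 1) \<le> g * w" using j(1) by (intro mult_le_mono2) simp
    then show "i \<in> {i \<in> {0..<g * w}. i mod g = r}" using j assms by simp
  qed
  moreover have "inj_on (\<lambda>j. g * j + r) {0..<w}" using assms by (intro inj_onI) simp
  ultimately show ?thesis by (simp add: card_image)
qed

lemma card_shape_set_residue:
  assumes g: "0 < g" and T: "0 < T" and kw: "k = g * w" and r: "r < g" and u: "u \<in> shapes k T"
  shows "card {a \<in> shape_set g T k u. a mod g = r} = w"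
proof -
  have "{a \<in> shape_set g T k u. a mod g = r} = shape_point g T u ` {i \<in> {0..<k}. i mod g = r}"
    using shape_point_mod[OF g] unfolding shape_set_def by auto
  moreover have "inj_on (shape_point g T u) {i \<in> {0..<k}. i mod g = r}"
    using inj_on_shape_point[OF g T u] by (rule inj_on_subset) blast
  ultimately show ?thesis
    using card_residue_class[OF g r, of w] kw by (simp add: card_image)
qed

lemma translate_mod_solution:
  fixes g n a y :: nat
  assumes g: "0 < g" and gn: "g dvd n" and a: "a < n" and y: "y < n" and ay: "a mod g = y mod g"
  shows "(a + g * (((y + n - a) mod n) div g)) mod n = y"
    and "((y + n - a) mod n) div g < n div g"
proof -
  have "(y + n) mod g = a mod g" using ay gn by (metis mod_add_self2 mod_mod_cancel)
  then have "g dvd (y + n) - a" using mod_eq_dvd_iff_nat[of a "y + n" g] a by simp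
  then have d: "g dvd (y + n - a) mod n" using gn by (simp add: dvd_mod)
  have "(a + (y + n - a) mod n) mod n = (y + n) mod n"
    using a by (simp add: mod_add_right_eq)
  with d y show "(a + g * (((y + n - a) mod n) div g)) mod n = y" by simp
  have "(y + n - a) mod n < n" using a by simp
  with d gn g show "((y + n - a) mod n) div g < n div g"
    by (metis dvd_div_mult_self div_less_iff_less_mult dvd_div_mult mult.commute nat_mult_less_cancel_disj)
qed

lemma card_shape_edges_containing:
  assumes g: "0 < g" and T: "0 < T" and kw: "k = g * w" and gn: "g dvd n" and u: "u \<in> shapes k T"
    and n: "k * T \<le> n" and y: "y < n"
  shows "card {x \<in> {0..<n div g}. y + 1 \<in> shape_edge n g T k u x} = w"
proof -
  define A where "A = {a \<in> shape_set g T k u. a mod g = y mod g}"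
  define X where "X = {x \<in> {0..<n div g}. y + 1 \<in> shape_edge n g T k u x}"
  define shift where "shift a = ((y + n - a) mod n) div g" for a
  have lt: "a < n" if "a \<in> shape_set g T k u" for a
    using shape_set_subset[OF g T kw u n] that by auto
  have mem: "y + 1 \<in> shape_edge n g T k u x \<longleftrightarrow> (\<exists>a \<in> shape_set g T k u. (a + g * x) mod n = y)" for x
    unfolding shape_edge_def by auto
  have gx: "g * x < n" if "x < n div g" for x
    using that g gn by (metis dvd_mult_div_cancel mult_less_cancel1)
  have shift: "(a + g * shift a) mod n = y" "shift a < n div g" if "a \<in> A" for a
    using translate_mod_solution[OF g gn lt y] that unfolding A_def shift_def by auto
  have "bij_betw shift A X"
  proof (rule bij_betwI')
    fix a a' assume a: "a \<in> A" and a': "a' \<in> A"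
    show "shift a = shift a' \<longleftrightarrow> a = a'"
    proof
      assume "shift a = shift a'"
      then have "(a + g * shift a) mod n = (a' + g * shift a) mod n" using shift(1)[OF a] shift(1)[OF a'] by simp
      then show "a = a'" using mod_add_cancel_right_nat[of a "g * shift a" n a'] lt a a'
        unfolding A_def by simp
    qed simp
  next
    fix a assume "a \<in> A"
    then show "shift a \<in> X" using shift mem unfolding A_def X_def by auto
  next
    fix x assume "x \<in> X"
    then obtain a where a: "a \<in> shape_set g T k u" "(a + g * x) mod n = y" and x: "x < n div g"
      using mem unfolding X_def by auto
    have "y mod g = (a + g * x) mod g" using a(2) mod_mod_cancel[OF gn] by metis
    then have aA: "a \<in> A" using a(1) unfolding A_def by simp
    have "(g * x + a) mod n = (g * shift a + a) mod n" using a(2) shift(1)[OF aA] by (simp add: add.commute)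
    then have "g * x = g * shift a"
      using mod_add_cancel_right_nat[of "g * x" a n "g * shift a"] gx[OF x] gx[OF shift(2)[OF aA]] by simp
    then show "\<exists>a\<in>A. x = shift a" using aA g by auto
  qed
  then have "card X = card A" by (rule bij_betw_same_card[symmetric])
  also have "card A = w" unfolding A_def using card_shape_set_residue[OF g T kw _ u] g by simp
  finally show ?thesis unfolding X_def .
qed

lemma inj_on_shape_edges:
  assumes g: "0 < g" and T: "0 < T" and kw: "k = g * w" and k: "0 < k" and gn: "g dvd n"
    and n: "2 * (k * T) \<le> n" and U: "U \<subseteq> shapes k T"
  shows "inj_on (\<lambda>(u, x). shape_edge n g T k u x) (U \<times> {0..<n div g})"
proof (rule inj_onI)
  fix p q assume pq: "p \<in> U \<times> {0..<n div g}" "q \<in> U \<times> {0..<n div g}"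
    "(\<lambda>(u, x). shape_edge n g T k u x) p = (\<lambda>(u, x). shape_edge n g T k u x) q"
  obtain u x u' x' where p: "p = (u, x)" and q: "q = (u', x')" by fastforce
  have "u = u' \<and> x = x'"
    using pq U unfolding p q by (intro shape_edge_inj[OF g T kw k gn n]) auto
  then show "p = q" unfolding p q by simp
qed

lemma card_shape_edges_at_vertex:
  assumes g: "0 < g" and T: "0 < T" and kw: "k = g * w" and k: "0 < k" and gn: "g dvd n"
    and n: "2 * (k * T) \<le> n" and U: "U \<subseteq> shapes k T" "finite U" and v: "v \<in> {1..n}"
  shows "card {e \<in> (\<lambda>(u, x). shape_edge n g T k u x) ` (U \<times> {0..<n div g}). v \<in> e} = card U * w"
proof -
  define E where "E = (\<lambda>(u, x). shape_edge n g T k u x)"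
  have "{e \<in> E ` (U \<times> {0..<n div g}). v \<in> e} = E ` {p \<in> U \<times> {0..<n div g}. v \<in> E p}" by auto
  then have "card {e \<in> E ` (U \<times> {0..<n div g}). v \<in> e} = card {p \<in> U \<times> {0..<n div g}. v \<in> E p}"
    using card_image[OF inj_on_subset[OF inj_on_shape_edges[OF g T kw k gn n U(1)]]]
    unfolding E_def by auto
  also have "{p \<in> U \<times> {0..<n div g}. v \<in> E p}
      = Sigma U (\<lambda>u. {x \<in> {0..<n div g}. (v - 1) + 1 \<in> shape_edge n g T k u x})"
    unfolding E_def using v by auto
  also have "card \<dots> = (\<Sum>u\<in>U. card {x \<in> {0..<n div g}. (v - 1) + 1 \<in> shape_edge n g T k u x})"
    using U(2) by (simp add: card_SigmaI)
  also have "\<dots> = (\<Sum>u\<in>U. w)"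
    using card_shape_edges_containing[OF g T kw gn _ _, of _ "v - 1"] U(1) n v by (intro sum.cong) auto
  finally show ?thesis unfolding E_def by simp
qed

lemma regular_kgraph_exists:
  fixes n k d :: nat
  assumes k: "0 < k" and n: "2 * k \<le> n" and dvd: "k dvd n * d" and d: "d \<le> (n div (2 * k)) ^ (k - 1)"
  shows "\<exists>H. regular_kgraph n k d H"
proof -
  define g where "g = gcd n k"
  define w where "w = k div g"
  define T where "T = n div (2 * k)"
  have g: "0 < g" and gn: "g dvd n" and kw: "k = g * w" unfolding g_def w_def using k by simp_all
  have T: "0 < T" unfolding T_def using n k by (simp add: div_greater_zero_iff)
  have "2 * k * T \<le> n" unfolding T_def by (rule times_div_less_eq_dividend)
  then have nT: "2 * (k * T) \<le> n" "k * T \<le> n" by simp_all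
  \<comment> \<open>Every vertex lies in exactly \<open>w\<close> translates of each shape, so we need \<open>d / w\<close> shapes.\<close>
  have "coprime w (n div g)" unfolding w_def g_def using div_gcd_coprime[of k n] k
    by (simp add: gcd.commute)
  moreover have "g * w dvd g * ((n div g) * d)" using dvd kw gn by (metis dvd_mult_div_cancel mult.assoc)
  ultimately have "w dvd d" using g by (simp add: coprime_dvd_mult_right_iff)
  then have dw: "d = (d div w) * w" by simp
  have "d div w \<le> card (shapes k T)"
    using div_le_dividend[of d w] d card_shapes[OF k, of T] unfolding T_def by linarith
  then obtain U where U: "U \<subseteq> shapes k T" "card U = d div w" "finite U"
    by (rule obtain_subset_with_card_n)
  have "regular_kgraph n k d ((\<lambda>(u, x). shape_edge n g T k u x) ` (U \<times> {0..<n div g}))"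
    unfolding regular_kgraph_def
  proof (intro conjI ballI subsetI)
    fix e assume "e \<in> (\<lambda>(u, x). shape_edge n g T k u x) ` (U \<times> {0..<n div g})"
    then obtain u x where "u \<in> U" "e = shape_edge n g T k u x" by auto
    moreover have "0 < n" using n k by simp
    ultimately show "e \<in> {e. e \<subseteq> {1..n} \<and> card e = k}"
      using card_shape_edge[OF g T kw _ nT(2)] shape_edge_subset[of n] U(1) by auto
  next
    fix v assume "v \<in> {1..n}"
    then show "card {e \<in> (\<lambda>(u, x). shape_edge n g T k u x) ` (U \<times> {0..<n div g}). v \<in> e} = d"
      using card_shape_edges_at_vertex[OF g T kw k gn nT(1) U(1,3)] U(2) dw by simp
  qed
  then show ?thesis by blast
qed

section \<open>Hypergeometric tails for random permutations\<close>

lemma power_one_plus_eq_sum_Pow: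
  fixes c :: "'a :: comm_semiring_1"
  assumes "finite B"
  shows "(1 + c) ^ card B = (\<Sum>J\<in>Pow B. c ^ card J)"
  using prod_add[of B "\<lambda>_. c" "\<lambda>_. 1"] assms by (simp add: add.commute)

lemma sum_power_card_Int_le:
  fixes c r K :: real and S :: "'a \<Rightarrow> 'b set"
  assumes "finite P" "finite D" "0 \<le> c"
    and subset_count: "\<And>J. J \<subseteq> D \<Longrightarrow> real (card {x \<in> P. J \<subseteq> S x}) \<le> K * r ^ card J"
  shows "(\<Sum>x\<in>P. (1 + c) ^ card (D \<inter> S x)) \<le> K * (1 + c * r) ^ card D"
proof -
  have "(\<Sum>x\<in>P. (1 + c) ^ card (D \<inter> S x)) = (\<Sum>x\<in>P. \<Sum>J\<in>Pow D. if J \<subseteq> S x then c ^ card J else 0)"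
  proof (rule sum.cong[OF refl])
    fix x
    have "Pow (D \<inter> S x) = {J \<in> Pow D. J \<subseteq> S x}" by auto
    then have "(1 + c) ^ card (D \<inter> S x) = (\<Sum>J\<in>{J \<in> Pow D. J \<subseteq> S x}. c ^ card J)"
      using assms(2) by (simp add: power_one_plus_eq_sum_Pow)
    also have "\<dots> = (\<Sum>J\<in>Pow D. if J \<subseteq> S x then c ^ card J else 0)"
      using sum.inter_filter[of "Pow D" "\<lambda>J. c ^ card J" "\<lambda>J. J \<subseteq> S x"] assms(2) by simp
    finally show "(1 + c) ^ card (D \<inter> S x) = (\<Sum>J\<in>Pow D. if J \<subseteq> S x then c ^ card J else 0)" .
  qed
  also have "\<dots> = (\<Sum>J\<in>Pow D. c ^ card J * real (card {x \<in> P. J \<subseteq> S x}))"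
    using assms(1) by (subst sum.swap) (simp add: sum.inter_filter[symmetric] mult.commute)
  also have "\<dots> \<le> (\<Sum>J\<in>Pow D. c ^ card J * (K * r ^ card J))"
    using subset_count assms(3) by (intro sum_mono mult_left_mono) auto
  also have "\<dots> = K * (1 + c * r) ^ card D"
    using assms(2) by (simp add: power_one_plus_eq_sum_Pow sum_distrib_left power_mult_distrib algebra_simps)
  finally show ?thesis .
qed

lemma card_ge_mult_le_sum:
  fixes f :: "'a \<Rightarrow> real"
  assumes "finite P" "\<And>x. x \<in> P \<Longrightarrow> 0 \<le> f x"
  shows "real (card {x \<in> P. a \<le> f x}) * a \<le> (\<Sum>x\<in>P. f x)"
proof -
  have "real (card {x \<in> P. a \<le> f x}) * a \<le> (\<Sum>x\<in>{x \<in> P. a \<le> f x}. f x)"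
    using sum_mono[of "{x \<in> P. a \<le> f x}" "\<lambda>_. a" f] by simp
  also have "\<dots> \<le> (\<Sum>x\<in>P. f x)" using assms by (intro sum_mono2) auto
  finally show ?thesis .
qed

lemma card_permutations_of_set_filter:
  assumes "finite A" "A \<noteq> {}"
  shows "card {es \<in> permutations_of_set A. P es}
    = (\<Sum>x\<in>A. card {xs \<in> permutations_of_set (A - {x}). P (x # xs)})"
proof -
  have "{es \<in> permutations_of_set A. P es}
      = (\<Union>x\<in>A. (#) x ` {xs \<in> permutations_of_set (A - {x}). P (x # xs)})"
    using permutations_of_set_nonempty[OF assms(2)] by auto
  also have "card \<dots> = (\<Sum>x\<in>A. card ((#) x ` {xs \<in> permutations_of_set (A - {x}). P (x # xs)}))"
    using assms(1) by (intro card_UN_disjoint) auto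
  also have "\<dots> = (\<Sum>x\<in>A. card {xs \<in> permutations_of_set (A - {x}). P (x # xs)})"
    by (intro sum.cong refl card_image) (simp add: inj_on_def)
  finally show ?thesis .
qed

lemma card_permutations_of_set_drop_Suc:
  assumes "finite A" "A \<noteq> {}" "J \<subseteq> A"
  shows "card {es \<in> permutations_of_set A. J \<subseteq> set (drop (Suc t) es)}
    = (\<Sum>x\<in>A - J. card {xs \<in> permutations_of_set (A - {x}). J \<subseteq> set (drop t xs)})"
proof -
  have "card {es \<in> permutations_of_set A. J \<subseteq> set (drop (Suc t) es)}
      = (\<Sum>x\<in>A. card {xs \<in> permutations_of_set (A - {x}). J \<subseteq> set (drop t xs)})"
    using card_permutations_of_set_filter[OF assms(1,2), of "\<lambda>es. J \<subseteq> set (drop (Suc t) es)"] by (simp only: drop_Suc_Cons)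
  also have "\<dots> = (\<Sum>x\<in>A - J. card {xs \<in> permutations_of_set (A - {x}). J \<subseteq> set (drop t xs)})"
  proof (rule sum.mono_neutral_right)
    show "\<forall>x\<in>A - (A - J). card {xs \<in> permutations_of_set (A - {x}). J \<subseteq> set (drop t xs)} = 0"
    proof
      fix x assume x: "x \<in> A - (A - J)"
      have "\<not> J \<subseteq> set (drop t xs)" if "xs \<in> permutations_of_set (A - {x})" for xs
      proof
        assume "J \<subseteq> set (drop t xs)"
        then have "x \<in> set xs" using x set_drop_subset[of t xs] by auto
        then show False using permutations_of_setD(1)[OF that] by simp
      qed
      then show "card {xs \<in> permutations_of_set (A - {x}). J \<subseteq> set (drop t xs)} = 0" by simp
    qed
  qed (use assms(1) in auto)
  finally show ?thesis .
qed

lemma diff_mult_power_le: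
  fixes N j :: nat and s :: real
  assumes "1 \<le> N" "j \<le> N" "0 \<le> s"
  shows "(real N - real j) * (s / (real N - 1)) ^ j \<le> real N * (s / real N) ^ j"
proof (cases "N = 1")
  case True
  with assms(2) consider "j = 0" | "j = 1" by linarith
  then show ?thesis using True assms(3) by cases simp_all
next
  case False
  then have N: "0 < real N - 1" using assms(1) by simp
  have "1 + real j * (- 1 / real N) \<le> (1 + (- 1 / real N)) ^ j"
    by (rule Bernoulli_inequality) (use assms in \<open>simp add: field_simps\<close>)
  then have "(real N - real j) / real N \<le> ((real N - 1) / real N) ^ j"
    using N by (simp add: field_simps)
  then have "(real N - real j) / real N * (s / (real N - 1)) ^ j
      \<le> ((real N - 1) / real N) ^ j * (s / (real N - 1)) ^ j"
    using N assms(3) by (intro mult_right_mono) simp_all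
  also have "((real N - 1) / real N) ^ j * (s / (real N - 1)) ^ j = (s / real N) ^ j"
    using N by (simp add: power_mult_distrib[symmetric])
  finally show ?thesis using N by (simp add: field_simps)
qed

lemma card_permutations_of_set_subset_drop_le:
  assumes "finite A" "J \<subseteq> A" "t \<le> card A"
  shows "real (card {es \<in> permutations_of_set A. J \<subseteq> set (drop t es)})
    \<le> fact (card A) * ((real (card A) - real t) / real (card A)) ^ card J"
  using assms
proof (induction t arbitrary: A)
  case 0
  have "card {es \<in> permutations_of_set A. J \<subseteq> set es} \<le> card (permutations_of_set A)"
    by (intro card_mono) auto
  then have "real (card {es \<in> permutations_of_set A. J \<subseteq> set es}) \<le> fact (card A)"
    using 0(1) by (metis card_permutations_of_set of_nat_fact of_nat_le_iff)
  moreover have "((real (card A) - 0) / real (card A)) ^ card J = 1"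
    using 0 by (cases "A = {}") simp_all
  ultimately show ?case by simp
next
  case (Suc t)
  define N where "N = card A"
  define s where "s = real N - 1 - real t"
  define bound where "bound = fact (N - 1) * (s / (real N - 1)) ^ card J"
  have N: "1 \<le> N" "A \<noteq> {}" "card J \<le> N" "Suc t \<le> N"
    using Suc.prems card_mono[OF Suc.prems(1,2)] unfolding N_def by auto
  have "real (card {es \<in> permutations_of_set A. J \<subseteq> set (drop (Suc t) es)})
      = (\<Sum>x\<in>A - J. real (card {xs \<in> permutations_of_set (A - {x}). J \<subseteq> set (drop t xs)}))"
    using card_permutations_of_set_drop_Suc[OF Suc.prems(1) N(2) Suc.prems(2)] by simp
  also have "\<dots> \<le> (\<Sum>x\<in>A - J. bound)"
  proof (rule sum_mono)
    fix x assume x: "x \<in> A - J"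
    then have cx: "card (A - {x}) = N - 1" using Suc.prems(1) unfolding N_def by simp
    have "real (card {xs \<in> permutations_of_set (A - {x}). J \<subseteq> set (drop t xs)})
        \<le> fact (card (A - {x})) * ((real (card (A - {x})) - real t) / real (card (A - {x}))) ^ card J"
      by (rule Suc.IH) (use Suc.prems(1,2) x cx N(4) in auto)
    also have "\<dots> = bound" unfolding bound_def s_def cx using N(1) by (simp add: of_nat_diff)
    finally show "real (card {xs \<in> permutations_of_set (A - {x}). J \<subseteq> set (drop t xs)}) \<le> bound" .
  qed
  also have "\<dots> = (real N - real (card J)) * bound"
  proof -
    have "card (A - J) = N - card J"
      unfolding N_def by (rule card_Diff_subset) (use Suc.prems finite_subset in auto)
    then show ?thesis using N(3) by (simp add: of_nat_diff)
  qed
  also have "\<dots> = fact (N - 1) * ((real N - real (card J)) * (s / (real N - 1)) ^ card J)"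
    unfolding bound_def by simp
  also have "\<dots> \<le> fact (N - 1) * (real N * (s / real N) ^ card J)"
    using N unfolding s_def by (intro mult_left_mono diff_mult_power_le) auto
  also have "\<dots> = fact N * ((real N - real (Suc t)) / real N) ^ card J"
    using fact_reduce[of N, where 'a=real] N(1) unfolding s_def by (simp add: diff_diff_eq)
  finally show ?case unfolding N_def .
qed

lemma card_permutations_of_set_subset_take_le:
  assumes "finite A" "J \<subseteq> A" "t \<le> card A"
  shows "real (card {es \<in> permutations_of_set A. J \<subseteq> set (take t es)})
    \<le> fact (card A) * (real t / real (card A)) ^ card J"
proof -
  define P where "P = permutations_of_set A"
  have rev: "rev es \<in> P \<longleftrightarrow> es \<in> P" for es
    unfolding P_def by (auto simp: permutations_of_set_def)
  have take_rev: "set (drop (card A - t) (rev es)) = set (take t es)" if "es \<in> P" for es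
    using length_finite_permutations_of_set[OF that[unfolded P_def]] assms(3) by (simp add: drop_rev)
  have "{es \<in> P. J \<subseteq> set (take t es)} = rev ` {es \<in> P. J \<subseteq> set (drop (card A - t) es)}"
  proof (intro equalityI subsetI)
    fix es assume "es \<in> {es \<in> P. J \<subseteq> set (take t es)}"
    then have "rev es \<in> {es \<in> P. J \<subseteq> set (drop (card A - t) es)}" using take_rev rev by simp
    then show "es \<in> rev ` {es \<in> P. J \<subseteq> set (drop (card A - t) es)}" by (rule image_eqI[rotated]) simp
  next
    fix es assume "es \<in> rev ` {es \<in> P. J \<subseteq> set (drop (card A - t) es)}"
    then obtain fs where "es = rev fs" "fs \<in> P" "J \<subseteq> set (drop (card A - t) fs)" by auto
    then show "es \<in> {es \<in> P. J \<subseteq> set (take t es)}" using take_rev[of es] rev by simp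
  qed
  then have "card {es \<in> P. J \<subseteq> set (take t es)} = card {es \<in> P. J \<subseteq> set (drop (card A - t) es)}"
    by (simp add: card_image)
  then show ?thesis
    using card_permutations_of_set_subset_drop_le[OF assms(1,2), of "card A - t"] assms(3)
    unfolding P_def by (simp add: of_nat_diff)
qed

lemma exp_minus_one_le_quadratic:
  fixes x :: real
  assumes "0 \<le> x" "x \<le> 1"
  shows "exp x - 1 \<le> x + x\<^sup>2"
  using exp_bound[OF assms] by simp

lemma exp_neg_le_quadratic:
  fixes x :: real
  assumes "0 \<le> x"
  shows "exp (- x) \<le> 1 - x + x\<^sup>2"
proof -
  define L where "L = 1 + x + x\<^sup>2 / 2"
  have L: "0 < L" "L \<le> exp x"
    unfolding L_def using exp_lower_Taylor_quadratic[OF assms] assms by (simp_all add: add_pos_nonneg)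
  have "1 \<le> (1 - x + x\<^sup>2) * L"
  proof -
    have "(1 - x + x\<^sup>2) * L = 1 + (x\<^sup>2 + x ^ 3 + x ^ 4) / 2"
      unfolding L_def by (simp add: field_simps power2_eq_square power3_eq_cube power4_eq_xxxx)
    then show ?thesis using assms by simp
  qed
  then have "1 / L \<le> 1 - x + x\<^sup>2" using L by (simp add: field_simps)
  moreover have "exp (- x) \<le> 1 / L" using L by (simp add: exp_minus field_simps)
  ultimately show ?thesis by linarith
qed

lemma power_le_exp_mult:
  fixes y :: real
  assumes "0 \<le> 1 + y"
  shows "(1 + y) ^ d \<le> exp (real d * y)"
  using power_mono[OF exp_ge_add_one_self assms] by (simp add: exp_of_nat_mult)

lemma card_Int_drop_add_card_Int_take:
  assumes "es \<in> permutations_of_set A" "D \<subseteq> A" "finite A"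
  shows "card (D \<inter> set (drop t es)) + card (D \<inter> set (take t es)) = card D"
proof -
  have "distinct es" "set es = A" using assms(1) by (auto dest: permutations_of_setD)
  have disj: "set (take t es) \<inter> set (drop t es) = {}"
    using \<open>distinct es\<close> by (rule set_take_disj_set_drop_if_distinct) simp
  have "set (take t es) \<union> set (drop t es) = A"
    using \<open>set es = A\<close> by (metis append_take_drop_id set_append)
  then have D: "D = D \<inter> set (drop t es) \<union> D \<inter> set (take t es)" using assms(2) by blast
  have "finite D" using assms(2,3) by (rule finite_subset)
  then have "card (D \<inter> set (drop t es) \<union> D \<inter> set (take t es))
      = card (D \<inter> set (drop t es)) + card (D \<inter> set (take t es))"
    using disj by (intro card_Un_disjoint) auto
  then show ?thesis using D by simp
qed

lemma chernoff_exponent_upper: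
  fixes mu lam :: real
  assumes "0 < lam" "lam \<le> 2 * mu"
  shows "(exp (lam / (2 * mu)) - 1) * mu - lam / (2 * mu) * (mu + lam) \<le> - lam\<^sup>2 / (4 * mu)"
proof -
  define th where "th = lam / (2 * mu)"
  have mu: "0 < mu" and th: "0 \<le> th" "th \<le> 1" using assms unfolding th_def by simp_all
  then have "(exp th - 1) * mu \<le> (th + th\<^sup>2) * mu"
    using exp_minus_one_le_quadratic[of th] by (intro mult_right_mono) auto
  moreover have "(th + th\<^sup>2) * mu - th * (mu + lam) = - lam\<^sup>2 / (4 * mu)"
    unfolding th_def using mu by (simp add: field_simps power2_eq_square)
  ultimately show ?thesis unfolding th_def by linarith
qed

lemma chernoff_exponent_lower:
  fixes mu lam :: real
  assumes "0 < lam" "lam \<le> 2 * mu"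
  shows "mu * (exp (- (lam / (2 * mu))) - 1) + lam / (2 * mu) * (mu - lam) \<le> - lam\<^sup>2 / (4 * mu)"
proof -
  define th where "th = lam / (2 * mu)"
  have mu: "0 < mu" and th: "0 \<le> th" using assms unfolding th_def by simp_all
  then have "mu * (exp (- th) - 1) \<le> mu * (- th + th\<^sup>2)"
    using exp_neg_le_quadratic[of th] by (intro mult_left_mono) auto
  moreover have "mu * (- th + th\<^sup>2) + th * (mu - lam) = - lam\<^sup>2 / (4 * mu)"
    unfolding th_def using mu by (simp add: field_simps power2_eq_square)
  ultimately show ?thesis unfolding th_def by linarith
qed

lemma power_mixture_le_exp:
  fixes p th :: real
  assumes "0 \<le> p" "p \<le> 1"
  shows "((1 + (exp th - 1) * (1 - p)) * exp (- th)) ^ m \<le> exp (real m * (p * (exp (- th) - 1)))"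
proof -
  have "(1 + (exp th - 1) * (1 - p)) * exp (- th) = 1 + p * (exp (- th) - 1)"
    by (simp add: algebra_simps exp_minus_inverse)
  moreover have "0 \<le> p * exp (- th)" using assms(1) by simp
  then have "0 \<le> 1 + p * (exp (- th) - 1)" using assms(2) by (simp add: algebra_simps)
  ultimately show ?thesis by (simp add: power_le_exp_mult)
qed

lemma card_permutations_of_set_drop_upper_tail:
  fixes A D :: "'a set" and t :: nat and lam :: real
  defines "mu \<equiv> real (card D) * ((real (card A) - real t) / real (card A))"
  assumes A: "finite A" "D \<subseteq> A" "t \<le> card A" and lam: "0 < lam" "lam \<le> 2 * mu"
  shows "real (card {es \<in> permutations_of_set A. mu + lam \<le> real (card (D \<inter> set (drop t es)))})
    \<le> fact (card A) * exp (- lam\<^sup>2 / (4 * mu))"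
proof -
  define P where "P = permutations_of_set A"
  define p where "p = (real (card A) - real t) / real (card A)"
  define th where "th = lam / (2 * mu)"
  define c where "c = exp th - 1"
  have mu: "0 < mu" using lam by simp
  have p: "0 \<le> p" using A(3) unfolding p_def by simp
  have th: "0 < th" using lam mu unfolding th_def by simp
  have c: "0 \<le> c" using th unfolding c_def by simp
  have pow: "(1 + c) ^ m = exp (th * real m)" for m
    unfolding c_def by (simp add: exp_of_nat2_mult)
  \<comment> \<open>Exponential moment of the count, then Markov's inequality at \<open>exp (th * (mu + lam))\<close>.\<close>
  have "(\<Sum>es\<in>P. (1 + c) ^ card (D \<inter> set (drop t es))) \<le> fact (card A) * (1 + c * p) ^ card D"
    unfolding P_def using A c
    by (intro sum_power_card_Int_le card_permutations_of_set_subset_drop_le[THEN order_trans])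
      (auto simp: p_def intro: finite_subset)
  also have "\<dots> \<le> fact (card A) * exp (c * mu)"
  proof -
    have "(1 + c * p) ^ card D \<le> exp (real (card D) * (c * p))"
      using c p by (intro power_le_exp_mult) simp
    also have "real (card D) * (c * p) = c * mu" unfolding mu_def p_def by simp
    finally show ?thesis by (intro mult_left_mono) simp_all
  qed
  finally have mgf: "(\<Sum>es\<in>P. (1 + c) ^ card (D \<inter> set (drop t es))) \<le> fact (card A) * exp (c * mu)" .
  have "{es \<in> P. mu + lam \<le> real (card (D \<inter> set (drop t es)))}
      = {es \<in> P. exp (th * (mu + lam)) \<le> (1 + c) ^ card (D \<inter> set (drop t es))}"
    unfolding pow using th by simp
  then have "real (card {es \<in> P. mu + lam \<le> real (card (D \<inter> set (drop t es)))}) * exp (th * (mu + lam))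
      \<le> (\<Sum>es\<in>P. (1 + c) ^ card (D \<inter> set (drop t es)))"
    using card_ge_mult_le_sum[of P "\<lambda>es. (1 + c) ^ card (D \<inter> set (drop t es))" "exp (th * (mu + lam))"] c
    unfolding P_def by simp
  with mgf have "real (card {es \<in> P. mu + lam \<le> real (card (D \<inter> set (drop t es)))})
      \<le> fact (card A) * exp (c * mu) / exp (th * (mu + lam))"
    by (simp add: field_simps)
  also have "\<dots> = fact (card A) * exp (c * mu - th * (mu + lam))" by (simp add: exp_diff)
  also have "c * mu - th * (mu + lam) \<le> - lam\<^sup>2 / (4 * mu)"
    using chernoff_exponent_upper[OF lam] unfolding c_def th_def .
  finally show ?thesis unfolding P_def by simp
qed

lemma card_permutations_of_set_drop_lower_tail:
  fixes A D :: "'a set" and t :: nat and lam :: real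
  defines "mu \<equiv> real (card D) * ((real (card A) - real t) / real (card A))"
  assumes A: "finite A" "D \<subseteq> A" "t \<le> card A" and lam: "0 < lam" "lam \<le> 2 * mu"
  shows "real (card {es \<in> permutations_of_set A. real (card (D \<inter> set (drop t es))) \<le> mu - lam})
    \<le> fact (card A) * exp (- lam\<^sup>2 / (4 * mu))"
proof -
  define P where "P = permutations_of_set A"
  define p where "p = (real (card A) - real t) / real (card A)"
  define q where "q = real t / real (card A)"
  define th where "th = lam / (2 * mu)"
  define c where "c = exp th - 1"
  define s where "s = th * (real (card D) - mu + lam)"
  have mu: "0 < mu" using lam by simp
  then have "0 < card A" unfolding mu_def by (cases "card A = 0") auto
  then have q: "0 \<le> q" "q = 1 - p" unfolding p_def q_def by (simp_all add: field_simps)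
  have p: "0 \<le> p" using A(3) unfolding p_def by simp
  have th: "0 < th" using lam mu unfolding th_def by simp
  have c: "0 \<le> c" using th unfolding c_def by simp
  have pow: "(1 + c) ^ m = exp (th * real m)" for m
    unfolding c_def by (simp add: exp_of_nat2_mult)
  \<comment> \<open>A small drop count means a large count in the complementary prefix \<open>take t es\<close>.\<close>
  have "{es \<in> P. real (card (D \<inter> set (drop t es))) \<le> mu - lam}
      \<subseteq> {es \<in> P. exp s \<le> (1 + c) ^ card (D \<inter> set (take t es))}"
  proof safe
    fix es assume es: "es \<in> P" "real (card (D \<inter> set (drop t es))) \<le> mu - lam"
    then have "real (card D) - mu + lam \<le> real (card (D \<inter> set (take t es)))"
      using card_Int_drop_add_card_Int_take[of es A D t] A unfolding P_def by linarith
    then show "exp s \<le> (1 + c) ^ card (D \<inter> set (take t es))"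
      unfolding pow s_def using th by simp
  qed
  then have "card {es \<in> P. real (card (D \<inter> set (drop t es))) \<le> mu - lam}
      \<le> card {es \<in> P. exp s \<le> (1 + c) ^ card (D \<inter> set (take t es))}"
    by (intro card_mono) (simp_all add: P_def)
  then have "real (card {es \<in> P. real (card (D \<inter> set (drop t es))) \<le> mu - lam}) * exp s
      \<le> real (card {es \<in> P. exp s \<le> (1 + c) ^ card (D \<inter> set (take t es))}) * exp s"
    by (intro mult_right_mono) simp_all
  also have "\<dots> \<le> (\<Sum>es\<in>P. (1 + c) ^ card (D \<inter> set (take t es)))"
    using card_ge_mult_le_sum[of P "\<lambda>es. (1 + c) ^ card (D \<inter> set (take t es))" "exp s"] c
    unfolding P_def by simp
  also have "\<dots> \<le> fact (card A) * (1 + c * q) ^ card D"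
    unfolding P_def using A c
    by (intro sum_power_card_Int_le card_permutations_of_set_subset_take_le[THEN order_trans])
      (auto simp: q_def intro: finite_subset)
  finally have "real (card {es \<in> P. real (card (D \<inter> set (drop t es))) \<le> mu - lam})
      \<le> fact (card A) * ((1 + c * q) * exp (- th)) ^ card D * exp (th * (mu - lam))"
    unfolding s_def by (simp add: field_simps power_mult_distrib exp_diff exp_add exp_minus
        flip: exp_of_nat2_mult)
  also have "((1 + c * q) * exp (- th)) ^ card D \<le> exp (mu * (exp (- th) - 1))"
  proof -
    have "((1 + c * q) * exp (- th)) ^ card D = ((1 + (exp th - 1) * (1 - p)) * exp (- th)) ^ card D"
      unfolding c_def q(2) ..
    also have "\<dots> \<le> exp (real (card D) * (p * (exp (- th) - 1)))"
      using p q by (intro power_mixture_le_exp) simp_all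
    also have "real (card D) * (p * (exp (- th) - 1)) = mu * (exp (- th) - 1)"
      unfolding mu_def p_def by simp
    finally show ?thesis .
  qed
  also have "fact (card A) * exp (mu * (exp (- th) - 1)) * exp (th * (mu - lam))
      = fact (card A) * exp (mu * (exp (- th) - 1) + th * (mu - lam))"
    by (simp add: exp_add)
  also have "mu * (exp (- th) - 1) + th * (mu - lam) \<le> - lam\<^sup>2 / (4 * mu)"
    using chernoff_exponent_lower[OF lam] unfolding th_def .
  finally show ?thesis unfolding P_def by simp
qed

lemma card_permutations_of_set_drop_deviation:
  fixes A D :: "'a set" and t :: nat and lam :: real
  defines "mu \<equiv> real (card D) * ((real (card A) - real t) / real (card A))"
  assumes "finite A" "D \<subseteq> A" "t \<le> card A" "0 < lam" "lam \<le> 2 * mu"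
  shows "real (card {es \<in> permutations_of_set A. lam < \<bar>real (card (D \<inter> set (drop t es))) - mu\<bar>})
    \<le> 2 * fact (card A) * exp (- lam\<^sup>2 / (4 * mu))"
proof -
  have "{es \<in> permutations_of_set A. lam < \<bar>real (card (D \<inter> set (drop t es))) - mu\<bar>}
      \<subseteq> {es \<in> permutations_of_set A. mu + lam \<le> real (card (D \<inter> set (drop t es)))}
        \<union> {es \<in> permutations_of_set A. real (card (D \<inter> set (drop t es))) \<le> mu - lam}"
    (is "_ \<subseteq> ?upper \<union> ?lower") by auto
  then have "card {es \<in> permutations_of_set A. lam < \<bar>real (card (D \<inter> set (drop t es))) - mu\<bar>}
      \<le> card (?upper \<union> ?lower)"
    by (intro card_mono) simp_all
  also have "\<dots> \<le> card ?upper + card ?lower" by (rule card_Un_le)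
  finally have "real (card {es \<in> permutations_of_set A. lam < \<bar>real (card (D \<inter> set (drop t es))) - mu\<bar>})
      \<le> real (card ?upper) + real (card ?lower)" by linarith
  then show ?thesis
    using card_permutations_of_set_drop_upper_tail[of A D t lam]
      card_permutations_of_set_drop_lower_tail[of A D t lam] assms
    unfolding mu_def by linarith
qed

section \<open>Concentration of the degrees in the process\<close>

lemma Xt_eq_card_Int_drop:
  assumes "es \<in> permutations_of_set A" "finite A" "card A = M"
  shows "Xt M es t v = card ({e \<in> A. v \<in> e} \<inter> set (drop t es))"
proof -
  have dist: "distinct es" and set: "set es = A" using assms(1) by (auto dest: permutations_of_setD)
  have len: "length es = M" using length_finite_permutations_of_set[OF assms(1)] assms(3) by simp
  define I where "I = {i. t \<le> i \<and> i < M \<and> v \<in> es ! i}"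
  have "(!) es ` I = {e \<in> A. v \<in> e} \<inter> set (drop t es)"
  proof (intro equalityI subsetI)
    fix e assume "e \<in> (!) es ` I"
    then obtain i where i: "t \<le> i" "i < M" "v \<in> es ! i" "e = es ! i" unfolding I_def by blast
    then have "es ! i = drop t es ! (i - t)" "i - t < length (drop t es)" using len by simp_all
    then show "e \<in> {e \<in> A. v \<in> e} \<inter> set (drop t es)"
      using i len set nth_mem[of i es] nth_mem[of "i - t" "drop t es"] by auto
  next
    fix e assume e: "e \<in> {e \<in> A. v \<in> e} \<inter> set (drop t es)"
    then obtain j where j: "j < length (drop t es)" "drop t es ! j = e" by (auto simp: in_set_conv_nth)
    then have "es ! (t + j) = e" "t + j \<in> I" using len e unfolding I_def by auto
    then show "e \<in> (!) es ` I" by (metis image_eqI)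
  qed
  moreover have "inj_on ((!) es) I" unfolding I_def using dist len by (intro inj_on_nth) auto
  ultimately show ?thesis unfolding Xt_def I_def[symmetric] by (metis card_image)
qed

lemma regular_kgraph_finite: "regular_kgraph n k d H \<Longrightarrow> finite H"
  unfolding regular_kgraph_def by (rule finite_subset[of _ "Pow {1..n}"]) auto

lemma regular_kgraph_card:
  assumes "regular_kgraph n k d H"
  shows "k * card H = n * d"
proof -
  have H: "H \<subseteq> {e. e \<subseteq> {1..n} \<and> card e = k}" and deg: "\<And>v. v \<in> {1..n} \<Longrightarrow> card {e \<in> H. v \<in> e} = d"
    using assms unfolding regular_kgraph_def by auto
  have fin: "finite H" using regular_kgraph_finite[OF assms] .
  have "n * d = (\<Sum>v\<in>{1..n}. card {e \<in> H. v \<in> e})" using deg by simp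
  also have "\<dots> = (\<Sum>v\<in>{1..n}. \<Sum>e\<in>H. if v \<in> e then 1 else 0)"
    using fin by (simp add: sum.If_cases Int_def)
  also have "\<dots> = (\<Sum>e\<in>H. \<Sum>v\<in>{1..n}. if v \<in> e then 1 else 0)" by (rule sum.swap)
  also have "\<dots> = (\<Sum>e\<in>H. card e)"
  proof (rule sum.cong[OF refl])
    fix e assume "e \<in> H"
    then have "{1..n} \<inter> e = e" using H by blast
    then show "(\<Sum>v\<in>{1..n}. if v \<in> e then 1 else 0) = card e" by (simp add: sum.If_cases)
  qed
  also have "\<dots> = k * card H" using H by (simp add: subset_iff)
  finally show ?thesis by simp
qed

lemma regular_kgraph_card_eq: "regular_kgraph n k d H \<Longrightarrow> 0 < k \<Longrightarrow> card H = n * d div k"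
  using regular_kgraph_card[of n k d H] by (metis nonzero_mult_div_cancel_left neq0_conv)

lemma card_permutations_of_set_deviation_le:
  fixes t M d :: nat and a L :: real
  defines "\<tau> \<equiv> 1 - real t / real M"
  assumes H: "finite H" "card H = M" "0 < M" "t \<le> M" and D: "D \<subseteq> H" "card D = d"
    and a: "0 < a * L" and lam: "sqrt (a * \<tau> * real d * L) \<le> \<tau> * real d / 2 - 1"
  shows "real (card {es \<in> permutations_of_set H.
      sqrt (a * \<tau> * real d * L) < \<bar>real (card (D \<inter> set (drop t es))) - \<tau> * real d\<bar>})
    \<le> 2 * fact M * exp (- (a * L) / 4)"
proof -
  define lam where "lam = sqrt (a * \<tau> * real d * L)"
  have "0 \<le> \<tau>" using H(3,4) unfolding \<tau>_def by (simp add: field_simps)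
  then have "0 \<le> a * L * (\<tau> * real d)" using a by simp
  moreover have "lam = sqrt (a * L * (\<tau> * real d))" unfolding lam_def by (simp add: ac_simps)
  ultimately have "0 \<le> lam" and lam2: "lam\<^sup>2 = a * L * (\<tau> * real d)" by simp_all
  then have mu: "2 \<le> \<tau> * real d" using lam unfolding lam_def by linarith
  then have "0 < lam\<^sup>2" using a lam2 by simp
  then have "0 < lam" using \<open>0 \<le> lam\<close> by (cases "lam = 0") auto
  have mu_eq: "real (card D) * ((real (card H) - real t) / real (card H)) = \<tau> * real d"
    using D H unfolding \<tau>_def by (simp add: field_simps)
  have "lam \<le> 2 * (\<tau> * real d)" using lam mu unfolding lam_def by linarith
  then have dev: "real (card {es \<in> permutations_of_set H. lam < \<bar>real (card (D \<inter> set (drop t es))) - \<tau> * real d\<bar>})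
      \<le> 2 * fact (card H) * exp (- lam\<^sup>2 / (4 * (\<tau> * real d)))"
    using card_permutations_of_set_drop_deviation[of H D t lam, unfolded mu_eq] H D \<open>0 < lam\<close> by simp
  have exponent: "- lam\<^sup>2 / (4 * (\<tau> * real d)) = - (a * L) / 4"
  proof -
    have "\<tau> \<noteq> 0" "real d \<noteq> 0" using mu by (auto intro: ccontr)
    then show ?thesis unfolding lam2 by simp
  qed
  show ?thesis using dev[unfolded exponent] unfolding lam_def H(2) .
qed

definition concentration_event :: "nat \<Rightarrow> nat \<Rightarrow> nat \<Rightarrow> real \<Rightarrow> real \<Rightarrow> nat set list set" where
  "concentration_event n k d eps a = {es. \<forall>t::nat. real t \<le> (1 - eps) * real (n * d div k) \<longrightarrow>
      (\<forall>v\<in>{1..n}.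
         let M = n * d div k; \<tau> = 1 - real t / real M in
         \<bar>real (Xt M es t v) - \<tau> * real d\<bar> \<le> sqrt (a * \<tau> * real d * ln (real n))
         \<and> sqrt (a * \<tau> * real d * ln (real n)) \<le> \<tau> * real d / 2 - 1)}"

lemma card_permutations_of_set_not_concentrated:
  fixes eps a :: real
  assumes reg: "regular_kgraph n k d H" and k: "0 < k" and M: "M = n * d div k" "0 < M"
    and a: "0 < a * ln (real n)"
    and window: "\<And>t::nat. real t \<le> (1 - eps) * real M \<Longrightarrow> t \<le> M \<and>
      sqrt (a * (1 - real t / real M) * real d * ln (real n)) \<le> (1 - real t / real M) * real d / 2 - 1"
  shows "real (card (permutations_of_set H - concentration_event n k d eps a))
    \<le> 2 * real (M + 1) * real n * fact M * exp (- (a * ln (real n)) / 4)"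
proof -
  have fin: "finite H" and card: "card H = M"
    using regular_kgraph_finite[OF reg] regular_kgraph_card_eq[OF reg k] M(1) by simp_all
  define P where "P = permutations_of_set H"
  define T where "T = {t \<in> {0..M}. real t \<le> (1 - eps) * real M}"
  define tau where "tau t = 1 - real t / real M" for t :: nat
  define bad where "bad t v = {es \<in> P. sqrt (a * tau t * real d * ln (real n))
      < \<bar>real (card ({e \<in> H. v \<in> e} \<inter> set (drop t es))) - tau t * real d\<bar>}" for t v
  define B where "B = 2 * fact M * exp (- (a * ln (real n)) / 4)"
  have "P - concentration_event n k d eps a \<subseteq> (\<Union>t\<in>T. \<Union>v\<in>{1..n}. bad t v)"
  proof
    fix es assume es: "es \<in> P - concentration_event n k d eps a"
    then obtain t v where t: "real t \<le> (1 - eps) * real M" and v: "v \<in> {1..n}"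
      and fails: "\<not> (\<bar>real (Xt M es t v) - tau t * real d\<bar> \<le> sqrt (a * tau t * real d * ln (real n))
        \<and> sqrt (a * tau t * real d * ln (real n)) \<le> tau t * real d / 2 - 1)"
      unfolding concentration_event_def M(1)[symmetric] tau_def Let_def by blast
    have "Xt M es t v = card ({e \<in> H. v \<in> e} \<inter> set (drop t es))"
      using es fin card unfolding P_def by (intro Xt_eq_card_Int_drop) auto
    then show "es \<in> (\<Union>t\<in>T. \<Union>v\<in>{1..n}. bad t v)"
      using es t v fails window[OF t] unfolding T_def bad_def tau_def by force
  qed
  then have "card (P - concentration_event n k d eps a) \<le> card (\<Union>t\<in>T. \<Union>v\<in>{1..n}. bad t v)"
    by (intro card_mono) (auto simp: T_def bad_def P_def)
  also have "\<dots> \<le> (\<Sum>t\<in>T. \<Sum>v\<in>{1..n}. card (bad t v))"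
    by (rule order_trans[OF card_UN_le sum_mono]) (auto simp: T_def intro: card_UN_le)
  finally have "real (card (P - concentration_event n k d eps a))
      \<le> (\<Sum>t\<in>T. \<Sum>v\<in>{1..n}. real (card (bad t v)))"
    by (simp flip: of_nat_sum)
  also have "\<dots> \<le> (\<Sum>t\<in>T. \<Sum>v\<in>{1..n}. B)"
  proof (intro sum_mono)
    fix t v assume "t \<in> T" "v \<in> {1..n}"
    then show "real (card (bad t v)) \<le> B"
      using window reg fin card M(2) a unfolding T_def bad_def tau_def B_def P_def regular_kgraph_def
      by (intro card_permutations_of_set_deviation_le) auto
  qed
  also have "\<dots> = real (card T) * real n * B" by simp
  also have "\<dots> \<le> real (M + 1) * real n * B"
  proof -
    have "card T \<le> card {0..M}" unfolding T_def by (intro card_mono) auto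
    then show ?thesis unfolding B_def by (intro mult_right_mono) auto
  qed
  finally show ?thesis unfolding B_def P_def by (simp add: algebra_simps)
qed

lemma prob_bind_pmf_of_set_ge:
  assumes "finite G" "G \<noteq> {}" "\<And>H. H \<in> G \<Longrightarrow> finite (S H) \<and> S H \<noteq> {}"
    and "\<And>H. H \<in> G \<Longrightarrow> 1 - \<delta> \<le> measure_pmf.prob (pmf_of_set (S H)) E"
  shows "1 - \<delta> \<le> measure_pmf.prob (pmf_of_set G \<bind> (\<lambda>H. pmf_of_set (S H))) E"
proof -
  have ind: "measure_pmf.prob p E = measure_pmf.expectation p (indicator E)" for p :: "'b pmf"
    by simp
  have "measure_pmf.prob (pmf_of_set G \<bind> (\<lambda>H. pmf_of_set (S H))) E
      = (\<Sum>H\<in>G. measure_pmf.prob (pmf_of_set (S H)) E / real (card G))"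
    unfolding ind using assms(1-3)
    by (subst pmf_expectation_bind_pmf_of_set) (auto simp: divide_inverse ac_simps)
  also have "\<dots> \<ge> (\<Sum>H\<in>G. (1 - \<delta>) / real (card G))"
    using assms by (intro sum_mono divide_right_mono) auto
  also have "(\<Sum>H\<in>G. (1 - \<delta>) / real (card G)) = 1 - \<delta>" using assms(1,2) by simp
  finally show ?thesis .
qed

lemma regular_kgraph_process_eq:
  "regular_kgraph_process n k d
    = pmf_of_set {H. regular_kgraph n k d H} \<bind> (\<lambda>H. pmf_of_set (permutations_of_set H))"
proof -
  have "{es. distinct es \<and> set es = H} = permutations_of_set H" for H :: "nat set set"
    by (auto simp: permutations_of_set_def)
  then show ?thesis unfolding regular_kgraph_process_def by simp
qed

lemma prob_concentration_event_given_graph: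
  fixes eps a :: real
  assumes reg: "regular_kgraph n k d H" and k: "0 < k" and M: "M = n * d div k" "0 < M"
    and a: "0 < a * ln (real n)"
    and window: "\<And>t::nat. real t \<le> (1 - eps) * real M \<Longrightarrow> t \<le> M \<and>
      sqrt (a * (1 - real t / real M) * real d * ln (real n)) \<le> (1 - real t / real M) * real d / 2 - 1"
  shows "1 - 2 * real (M + 1) * real n * exp (- (a * ln (real n)) / 4)
    \<le> measure_pmf.prob (pmf_of_set (permutations_of_set H)) (concentration_event n k d eps a)"
proof -
  define P where "P = permutations_of_set H"
  define E where "E = concentration_event n k d eps a"
  define \<delta> where "\<delta> = 2 * real (M + 1) * real n * exp (- (a * ln (real n)) / 4)"
  have fin: "finite H" using regular_kgraph_finite[OF reg] .
  have cardH: "card H = M" using regular_kgraph_card_eq[OF reg k] M(1) by simp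
  then have card: "real (card P) = fact M" unfolding P_def using fin by simp
  have "real (card (P - E)) \<le> \<delta> * fact M"
    using card_permutations_of_set_not_concentrated[where eps = eps and a = a, OF reg k M a window]
    unfolding P_def E_def \<delta>_def by (simp add: ac_simps)
  moreover have "card P = card (P \<inter> E) + card (P - E)"
    unfolding P_def by (rule card_Int_Diff) simp
  ultimately have "1 - \<delta> \<le> real (card (P \<inter> E)) / fact M" using card by (simp add: field_simps)
  then show ?thesis
    using fin cardH unfolding P_def E_def \<delta>_def by (simp add: measure_pmf_of_set Int_commute)
qed

section \<open>Choice of the constants\<close>

lemma cube_le_of_powr_one_third_le:
  fixes A B C eps :: real
  assumes "0 \<le> A" "0 \<le> B" "1 \<le> C" "C * (A + B) powr (1/3) \<le> eps" "eps < 1"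
  shows "C ^ 3 * A \<le> eps" "C ^ 3 * B \<le> eps"
proof -
  have "0 \<le> C * (A + B) powr (1/3)" using assms(3) by simp
  then have "(C * (A + B) powr (1/3)) ^ 3 \<le> eps ^ 3" by (rule power_mono[OF assms(4)])
  also have "\<dots> \<le> eps ^ 1"
    using \<open>0 \<le> C * _\<close> assms(4,5) by (intro power_decreasing) simp_all
  also have "(C * (A + B) powr (1/3)) ^ 3 = C ^ 3 * (A + B)"
  proof (cases "A + B = 0")
    case False
    then have "((A + B) powr (1/3)) ^ 3 = (A + B) powr (real 3 * (1/3))" by (simp add: powr_power)
    then show ?thesis using assms(1,2) False by (simp add: power_mult_distrib)
  qed simp
  finally have "C ^ 3 * (A + B) \<le> eps" by simp
  moreover have "C ^ 3 * A \<le> C ^ 3 * (A + B)" "C ^ 3 * B \<le> C ^ 3 * (A + B)"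
    using assms(1-3) by (intro mult_left_mono; simp)+
  ultimately show "C ^ 3 * A \<le> eps" "C ^ 3 * B \<le> eps" by linarith+
qed

lemma sqrt_le_half_minus_one:
  fixes a c L x :: real
  assumes "0 \<le> a" "1 \<le> L" "16 * a \<le> c" "16 \<le> c" "c * L \<le> x"
  shows "sqrt (a * x * L) \<le> x / 2 - 1"
proof -
  have "c * 1 \<le> c * L" using assms(2,4) by (intro mult_left_mono) simp_all
  then have "16 \<le> x" using assms(4,5) by linarith
  have "a * x * L \<le> a * x * (x / c)"
    using assms \<open>16 \<le> x\<close> by (intro mult_left_mono) (simp_all add: field_simps)
  also have "\<dots> \<le> (x / 4)\<^sup>2"
    using assms \<open>16 \<le> x\<close> by (simp add: field_simps power2_eq_square mult_right_mono)
  finally have "sqrt (a * x * L) \<le> x / 4"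
    using \<open>16 \<le> x\<close> real_sqrt_le_mono by fastforce
  then show ?thesis using \<open>16 \<le> x\<close> by simp
qed

lemma real_div_ge_half:
  fixes n m :: nat
  assumes "0 < m" "2 * m \<le> n"
  shows "real n / (2 * real m) \<le> real (n div m)"
proof -
  have "n = m * (n div m) + n mod m" by simp
  moreover have "n mod m < m" using assms(1) by simp
  ultimately have "n < m * (n div m) + m" by linarith
  then have "real n < real m * real (n div m) + real m" by (metis of_nat_add of_nat_less_iff of_nat_mult)
  then show ?thesis using assms by (simp add: field_simps)
qed

lemma regular_kgraph_exists_sparse:
  assumes k: "0 < k" and n: "4 * k \<le> n" and dvd: "k dvd n * d"
    and d: "real d * (4 * real k) ^ (k - 1) \<le> real n ^ (k - 1)"
  shows "\<exists>H. regular_kgraph n k d H"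
proof (rule regular_kgraph_exists[OF k _ dvd])
  show "2 * k \<le> n" using n by simp
  have "real d \<le> (real n / (4 * real k)) ^ (k - 1)"
    using d k by (simp add: power_divide field_simps)
  also have "\<dots> \<le> real (n div (2 * k)) ^ (k - 1)"
    using real_div_ge_half[of "2 * k" n] n k by (intro power_mono) (simp_all add: mult.assoc)
  finally show "d \<le> (n div (2 * k)) ^ (k - 1)" by (simp flip: of_nat_power)
qed

lemma concentration_window:
  fixes eps a c L :: real
  assumes "0 < M" "real t \<le> (1 - eps) * real M" "0 < eps"
    and "0 \<le> a" "1 \<le> L" "16 * a \<le> c" "16 \<le> c" "c * L \<le> eps * real d"
  shows "t \<le> M \<and>
    sqrt (a * (1 - real t / real M) * real d * L) \<le> (1 - real t / real M) * real d / 2 - 1"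
proof
  have "(1 - eps) * real M \<le> real M" using assms(1,3) by simp
  then show "t \<le> M" using assms(2) by linarith
  have "eps \<le> 1 - real t / real M" using assms(1,2) by (simp add: field_simps)
  then have "eps * real d \<le> (1 - real t / real M) * real d" by (simp add: mult_right_mono)
  then have "sqrt (a * ((1 - real t / real M) * real d) * L) \<le> (1 - real t / real M) * real d / 2 - 1"
    using assms(4-8) by (intro sqrt_le_half_minus_one[where c = c]) simp_all
  then show "sqrt (a * (1 - real t / real M) * real d * L) \<le> (1 - real t / real M) * real d / 2 - 1"
    by (simp add: mult.assoc)
qed

lemma exp_union_bound_le:
  fixes n k M :: nat
  assumes "0 < n" "M \<le> n ^ k"
  shows "2 * real (M + 1) * real n * exp (- (4 * (real k + 2) * ln (real n)) / 4) \<le> 4 / real n"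
proof -
  have "- (4 * (real k + 2) * ln (real n)) / 4 = - (real (k + 2) * ln (real n))" by simp
  then have "exp (- (4 * (real k + 2) * ln (real n)) / 4) = inverse (exp (real (k + 2) * ln (real n)))"
    by (simp only: exp_minus)
  also have "exp (real (k + 2) * ln (real n)) = real n ^ (k + 2)"
    using exp_of_nat_mult[of "k + 2" "ln (real n)"] assms(1) by simp
  finally have e: "exp (- (4 * (real k + 2) * ln (real n)) / 4) = inverse (real n ^ (k + 2))" .
  have "real M \<le> real n ^ k" using assms(2) of_nat_le_iff[of M "n ^ k"] by simp
  moreover have "1 \<le> real n ^ k" using assms(1) by simp
  ultimately have "real M + 1 \<le> 2 * real n ^ k" by linarith
  then have "2 * real (M + 1) * real n \<le> 2 * (2 * real n ^ k) * real n"
    by (intro mult_right_mono) simp_all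
  then have "2 * real (M + 1) * real n \<le> 4 * real n ^ (k + 1)" by (simp add: algebra_simps)
  then have "2 * real (M + 1) * real n * inverse (real n ^ (k + 2)) \<le> 4 * real n ^ (k + 1) * inverse (real n ^ (k + 2))"
    by (rule mult_right_mono) simp
  also have "4 * real n ^ (k + 1) * inverse (real n ^ (k + 2)) = 4 / real n"
    using assms(1) by (simp add: field_simps)
  finally show ?thesis unfolding e .
qed

lemma constants_le_cube:
  fixes k :: nat
  defines "a \<equiv> 4 * (real k + 2)" and "C \<equiv> 16 * (4 * (real k + 2)) * (4 * real k) ^ k"
  assumes "0 < k"
  shows "1 \<le> C" "16 \<le> C ^ 3" "16 * a \<le> C ^ 3" "(4 * real k) ^ (k - 1) \<le> C ^ 3"
proof -
  define P where "P = (4 * real k) ^ k"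
  have a: "1 \<le> a" unfolding a_def by simp
  have P: "1 \<le> P" "(4 * real k) ^ (k - 1) \<le> P"
    unfolding P_def using assms(3) by (intro one_le_power power_increasing; simp)+
  have "16 * a * 1 \<le> C" "1 * P \<le> C"
    unfolding C_def a_def P_def[symmetric] using P(1) by (intro mult_left_mono mult_right_mono; simp)+
  moreover have "C \<le> C ^ 3" if "1 \<le> C" using that power_increasing[of 1 3 C] by simp
  ultimately show "1 \<le> C" "16 \<le> C ^ 3" "16 * a \<le> C ^ 3" "(4 * real k) ^ (k - 1) \<le> C ^ 3"
    using a P by fastforce+
qed

lemma epsilon_bound_consequences:
  fixes C eps :: real and n k d :: nat
  assumes "1 \<le> C" "0 < d" "0 < n" "1 \<le> ln (real n)" "eps < 1"
    and "C * ((real d / real n ^ (k - 1) + ln (real n) / real d) powr (1/3) + 1 / real n) \<le> eps"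
  shows "C ^ 3 * real d \<le> real n ^ (k - 1)" "C ^ 3 * ln (real n) \<le> eps * real d"
proof -
  have "0 \<le> C * (1 / real n)" using assms(1) by simp
  then have "C * (real d / real n ^ (k - 1) + ln (real n) / real d) powr (1/3) \<le> eps"
    using assms(6)[unfolded distrib_left] by linarith
  moreover have "0 \<le> real d / real n ^ (k - 1)" "0 \<le> ln (real n) / real d" using assms(4) by simp_all
  ultimately have "C ^ 3 * (real d / real n ^ (k - 1)) \<le> eps" "C ^ 3 * (ln (real n) / real d) \<le> eps"
    using cube_le_of_powr_one_third_le[OF _ _ assms(1) _ assms(5)] by blast+
  moreover have "0 < real n ^ (k - 1)" using assms(3) by simp
  ultimately have "C ^ 3 * real d \<le> eps * real n ^ (k - 1)" "C ^ 3 * ln (real n) \<le> eps * real d"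
    using assms(2) by (simp_all add: field_simps)
  moreover have "eps * real n ^ (k - 1) \<le> 1 * real n ^ (k - 1)"
    using assms(5) by (intro mult_right_mono) simp_all
  ultimately show "C ^ 3 * real d \<le> real n ^ (k - 1)" "C ^ 3 * ln (real n) \<le> eps * real d" by linarith+
qed

lemma edge_count_le_power:
  fixes n k d M :: nat
  assumes "0 < k" "k * M = n * d" "d \<le> n ^ (k - 1)"
  shows "M \<le> n ^ k"
proof -
  have "k * M \<le> n * n ^ (k - 1)" using assms(2,3) by simp
  also have "n * n ^ (k - 1) = n ^ k" using assms(1) by (cases k) simp_all
  finally have "k * M \<le> n ^ k" .
  moreover have "M \<le> k * M" using assms(1) by simp
  ultimately show ?thesis by linarith
qed

lemma prob_concentration_event_ge:
  fixes n k d :: nat and eps :: real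
  defines "a \<equiv> 4 * (real k + 2)" and "C \<equiv> 16 * (4 * (real k + 2)) * (4 * real k) ^ k"
  assumes k: "0 < k" and n: "4 * k \<le> n" and d: "0 < d" "k dvd n * d" and eps: "0 < eps" "eps < 1"
    and hyp: "C * ((real d / real n ^ (k - 1) + ln (real n) / real d) powr (1/3) + 1 / real n) \<le> eps"
  shows "1 - 4 / real n \<le> measure_pmf.prob (regular_kgraph_process n k d) (concentration_event n k d eps a)"
proof -
  define M where "M = n * d div k"
  have "k * M = n * d" unfolding M_def using d(2) by simp
  then have M: "0 < M" using d n k by (intro gr0I) auto
  have "exp 1 < real n" using n k e_less_272 by linarith
  then have ln: "1 \<le> ln (real n)" using k n by (simp add: ln_ge_iff)
  note C = constants_le_cube[OF k, folded a_def C_def]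
  have sparse: "C ^ 3 * real d \<le> real n ^ (k - 1)" and dense: "C ^ 3 * ln (real n) \<le> eps * real d"
    using epsilon_bound_consequences[OF C(1) d(1) _ ln eps(2) hyp] n k by simp_all
  have "real d * (4 * real k) ^ (k - 1) \<le> real d * C ^ 3" using C(4) by (intro mult_left_mono) simp_all
  then have "\<exists>H. regular_kgraph n k d H"
    using sparse by (intro regular_kgraph_exists_sparse[OF k n d(2)]) (simp add: mult.commute)
  moreover have "finite {H. regular_kgraph n k d H}"
    unfolding regular_kgraph_def by (rule finite_subset[of _ "Pow (Pow {1..n})"]) auto
  moreover have "1 - 2 * real (M + 1) * real n * exp (- (a * ln (real n)) / 4)
      \<le> measure_pmf.prob (pmf_of_set (permutations_of_set H)) (concentration_event n k d eps a)"
    if "regular_kgraph n k d H" for H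
    using that k M_def M eps(1) C(2,3) ln dense unfolding a_def
    by (intro prob_concentration_event_given_graph concentration_window[where c = "C ^ 3"]) auto
  ultimately have "1 - 2 * real (M + 1) * real n * exp (- (a * ln (real n)) / 4)
      \<le> measure_pmf.prob (regular_kgraph_process n k d) (concentration_event n k d eps a)"
    unfolding regular_kgraph_process_eq
    by (intro prob_bind_pmf_of_set_ge) (auto simp: regular_kgraph_finite)
  moreover have "1 * real d \<le> C ^ 3 * real d" using C(2) by (intro mult_right_mono) simp_all
  then have "real d \<le> real n ^ (k - 1)" using sparse by linarith
  then have "d \<le> n ^ (k - 1)" using of_nat_le_iff[of d "n ^ (k - 1)"] by simp
  then have "M \<le> n ^ k" using edge_count_le_power[OF k \<open>k * M = n * d\<close>] by simp
  then have "2 * real (M + 1) * real n * exp (- (a * ln (real n)) / 4) \<le> 4 / real n"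
    using exp_union_bound_le n k unfolding a_def by simp
  ultimately show ?thesis by linarith
qed

lemma tendsto_one_if_eventually_ge:
  fixes p :: "nat \<Rightarrow> real"
  assumes "\<forall>\<^sub>F n in sequentially. 1 - c / real n \<le> p n" "\<forall>\<^sub>F n in sequentially. p n \<le> 1"
  shows "p \<longlonglongrightarrow> 1"
proof (rule real_tendsto_sandwich[OF assms])
  show "(\<lambda>n. 1 - c / real n) \<longlonglongrightarrow> 1"
    using tendsto_diff[OF tendsto_const tendsto_mult_left[OF lim_inverse_n', of c]] by (simp add: divide_inverse)
qed simp

theorem claim3p1:
  fixes k :: nat
  assumes "k \<ge> 2"
  shows "\<exists>a::real. a > 0 \<and> (\<exists>C'::real. \<forall>(d::nat \<Rightarrow> nat) (\<epsilon>::nat \<Rightarrow> real).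
    (\<forall>\<^sub>F n in sequentially.
        0 < d n \<and> k dvd n * d n \<and> 0 < \<epsilon> n \<and> \<epsilon> n < 1 \<and>
        (1 - \<epsilon> n) * real (n * d n div k) \<in> \<int> \<and>
        C' * ((real (d n) / real n ^ (k - 1) + ln (real n) / real (d n)) powr (1/3) + 1 / real n)
          \<le> \<epsilon> n)
    \<longrightarrow>
    (\<lambda>n. measure_pmf.prob (regular_kgraph_process n k (d n))
        {es. \<forall>t::nat. real t \<le> (1 - \<epsilon> n) * real (n * d n div k) \<longrightarrow>
              (\<forall>v\<in>{1..n}.
                 let M = n * d n div k; \<tau> = 1 - real t / real M in
                 \<bar>real (Xt M es t v) - \<tau> * real (d n)\<bar> \<le> sqrt (a * \<tau> * real (d n) * ln (real n))
                 \<and> sqrt (a * \<tau> * real (d n) * ln (real n)) \<le> \<tau> * real (d n) / 2 - 1)})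
      \<longlonglongrightarrow> 1)"
proof -
  define a :: real where "a = 4 * (real k + 2)"
  define C :: real where "C = 16 * (4 * (real k + 2)) * (4 * real k) ^ k"
  have "(\<lambda>n. measure_pmf.prob (regular_kgraph_process n k (d n)) (concentration_event n k (d n) (\<epsilon> n) a))
      \<longlonglongrightarrow> 1"
    if hyp: "\<forall>\<^sub>F n in sequentially.
        0 < d n \<and> k dvd n * d n \<and> 0 < \<epsilon> n \<and> \<epsilon> n < 1 \<and>
        (1 - \<epsilon> n) * real (n * d n div k) \<in> \<int> \<and>
        C * ((real (d n) / real n ^ (k - 1) + ln (real n) / real (d n)) powr (1/3) + 1 / real n)
          \<le> \<epsilon> n"
    for d :: "nat \<Rightarrow> nat" and \<epsilon> :: "nat \<Rightarrow> real"
  proof (rule tendsto_one_if_eventually_ge)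
    show "\<forall>\<^sub>F n in sequentially. 1 - 4 / real n
        \<le> measure_pmf.prob (regular_kgraph_process n k (d n)) (concentration_event n k (d n) (\<epsilon> n) a)"
      using hyp eventually_ge_at_top[of "4 * k"]
    proof eventually_elim
      case (elim n)
      then show ?case
        unfolding a_def using assms by (intro prob_concentration_event_ge) (simp_all add: C_def)
    qed
  qed (simp add: measure_pmf.prob_le_1)
  moreover have "a > 0" unfolding a_def by simp
  ultimately show ?thesis unfolding concentration_event_def by blast
qed

end
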